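(* Let $k\ge 2$ be an integer, let $G$ be a $(k+1)$-regular graph, and suppose that $S_0$ is a $k$-conversion set of $G$ with $|S_0|=k$. Then $|V(G)-S_0|<\frac{k(k+1)-1}{k-1}$.
   Context: For a graph $G=(V,E)$, a positive integer $k$ and a set $S_0\subseteq V$, the irreversible $k$-threshold conversion process is defined by: for $t=1,2,\dots$, the set of converted vertices at time $t$ is obtained from that at time $t-1$ by adjoining all vertices having at least $k$ neighbours among the vertices converted at time $t-1$ (with $S_0$ converted at time $0$). The set $S_0$ is a $k$-conversion set of $G$ if every vertex of $G$ is eventually converted. *)

theory Defs
  imports Complex_Main
begin

definition simple_graph :: "'a set \<Rightarrow> ('a \<Rightarrow> 'a \<Rightarrow> bool) \<Rightarrow> bool" where
  "simple_graph V E \<longleftrightarrow> finite V \<and> (\<forall>u v. E u v \<longrightarrow> u \<in> V \<and> v \<in> V)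
     \<and> (\<forall>u v. E u v \<longrightarrow> E v u) \<and> (\<forall>v. \<not> E v v)"

definition nbhd :: "'a set \<Rightarrow> ('a \<Rightarrow> 'a \<Rightarrow> bool) \<Rightarrow> 'a \<Rightarrow> 'a set" where
  "nbhd V E v = {u \<in> V. E v u}"

definition regular :: "'a set \<Rightarrow> ('a \<Rightarrow> 'a \<Rightarrow> bool) \<Rightarrow> nat \<Rightarrow> bool" where
  "regular V E r \<longleftrightarrow> (\<forall>v\<in>V. card (nbhd V E v) = r)"

fun converted :: "'a set \<Rightarrow> ('a \<Rightarrow> 'a \<Rightarrow> bool) \<Rightarrow> nat \<Rightarrow> 'a set \<Rightarrow> nat \<Rightarrow> 'a set" where
  "converted V E k S0 0 = S0"
| "converted V E k S0 (Suc t) =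
     converted V E k S0 t \<union> {v \<in> V. card (nbhd V E v \<inter> converted V E k S0 t) \<ge> k}"

definition conversion_set :: "'a set \<Rightarrow> ('a \<Rightarrow> 'a \<Rightarrow> bool) \<Rightarrow> nat \<Rightarrow> 'a set \<Rightarrow> bool" where
  "conversion_set V E k S0 \<longleftrightarrow> S0 \<subseteq> V \<and> (\<forall>v\<in>V. \<exists>t. v \<in> converted V E k S0 t)"

end

theory Submission
  imports Defs
begin

text \<open>The number of edges leaving the converted set is a potential. Adding a vertex with
  \<open>a\<close> of its \<open>r\<close> neighbours already inside changes it by \<open>r - 2a\<close>, so in a
  \<open>(k+1)\<close>-regular graph every conversion lowers it by at least \<open>k - 1\<close>. It starts
  at most \<open>k(k+1)\<close> on \<open>S0\<close>, and just before the last vertex converts it is still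
  \<open>k + 1\<close>, the degree of that vertex. Hence \<open>(k-1)(|V - S0| - 1) \<le> k\<^sup>2 - 1\<close>,
  that is \<open>|V - S0| \<le> k + 2\<close>.\<close>

definition edge_boundary :: "'a set \<Rightarrow> ('a \<Rightarrow> 'a \<Rightarrow> bool) \<Rightarrow> 'a set \<Rightarrow> nat" where
  "edge_boundary V E C = (\<Sum>u\<in>C. card (nbhd V E u - C))"

lemma finite_nbhd: "simple_graph V E \<Longrightarrow> finite (nbhd V E u)"
  by (simp add: simple_graph_def nbhd_def)

lemma card_nbhd_Diff_insert:
  assumes "simple_graph V E" and "v \<in> V" "v \<notin> D" and "u \<in> D"
  shows "card (nbhd V E u - D) = card (nbhd V E u - insert v D) + (if E u v then 1 else 0)"
proof (cases "E u v")
  case True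
  then have eq: "nbhd V E u - D = insert v (nbhd V E u - insert v D)"
    using assms(2-4) by (auto simp: nbhd_def)
  have "finite (nbhd V E u - insert v D)"
    using finite_nbhd[OF assms(1)] by blast
  then have "card (nbhd V E u - D) = Suc (card (nbhd V E u - insert v D))"
    unfolding eq by simp
  then show ?thesis
    using True by simp
next
  case False
  then have "nbhd V E u - D = nbhd V E u - insert v D"
    by (auto simp: nbhd_def)
  then show ?thesis
    using False by (simp only: if_False add_0_right)
qed

lemma edge_boundary_insert:
  assumes G: "simple_graph V E" and "v \<in> V" "v \<notin> D" "D \<subseteq> V"
  shows "edge_boundary V E (insert v D) + 2 * card (nbhd V E v \<inter> D)
           = edge_boundary V E D + card (nbhd V E v)"
proof -
  let ?rest = "\<Sum>u\<in>D. card (nbhd V E u - insert v D)"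
  have fin: "finite D"
    using G \<open>D \<subseteq> V\<close> finite_subset by (auto simp: simple_graph_def)
  have "(\<Sum>u\<in>D. if E u v then 1 else 0 :: nat) = card (D \<inter> {u. E u v})"
    using fin by (simp add: sum.If_cases)
  also have "D \<inter> {u. E u v} = nbhd V E v \<inter> D"
    using G \<open>D \<subseteq> V\<close> by (auto simp: nbhd_def simple_graph_def)
  finally have back_edges: "(\<Sum>u\<in>D. if E u v then 1 else 0) = card (nbhd V E v \<inter> D)" .
  have "edge_boundary V E D = (\<Sum>u\<in>D. card (nbhd V E u - insert v D) + (if E u v then 1 else 0))"
    unfolding edge_boundary_def
    using card_nbhd_Diff_insert[OF G \<open>v \<in> V\<close> \<open>v \<notin> D\<close>] by (intro sum.cong refl) blast
  also have "\<dots> = ?rest + card (nbhd V E v \<inter> D)"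
    by (simp only: sum.distrib back_edges)
  finally have old: "edge_boundary V E D = ?rest + card (nbhd V E v \<inter> D)" .
  have "nbhd V E v - insert v D = nbhd V E v - D"
    using G by (auto simp: simple_graph_def nbhd_def)
  then have new: "edge_boundary V E (insert v D) = card (nbhd V E v - D) + ?rest"
    unfolding edge_boundary_def using fin \<open>v \<notin> D\<close> by simp
  have "card (nbhd V E v) = card (nbhd V E v \<inter> D) + card (nbhd V E v - D)"
    using finite_nbhd[OF G] by (metis card_Int_Diff)
  with old new show ?thesis by linarith
qed

lemma edge_boundary_Diff_singleton:
  assumes G: "simple_graph V E" and "w \<in> V"
  shows "edge_boundary V E (V - {w}) = card (nbhd V E w)"
proof -
  have "nbhd V E u - V = {}" for u
    by (auto simp: nbhd_def)
  then have "card (nbhd V E u - V) = 0" for u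
    by (simp only: card.empty)
  then have "edge_boundary V E V = 0"
    unfolding edge_boundary_def by (simp only: sum.neutral_const)
  moreover have "nbhd V E w \<inter> (V - {w}) = nbhd V E w"
    using G by (auto simp: nbhd_def simple_graph_def)
  moreover have "insert w (V - {w}) = V"
    using \<open>w \<in> V\<close> by auto
  ultimately show ?thesis
    using edge_boundary_insert[OF G \<open>w \<in> V\<close>, of "V - {w}"] by simp
qed

lemma edge_boundary_le_regular:
  assumes G: "simple_graph V E" and R: "regular V E r" and "C \<subseteq> V"
  shows "edge_boundary V E C \<le> r * card C"
proof -
  have "edge_boundary V E C \<le> (\<Sum>u\<in>C. r)"
    unfolding edge_boundary_def
  proof (rule sum_mono)
    fix u assume "u \<in> C"
    then have "card (nbhd V E u) = r"
      using R \<open>C \<subseteq> V\<close> by (auto simp: regular_def)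
    then show "card (nbhd V E u - C) \<le> r"
      using finite_nbhd[OF G] by (metis card_mono Diff_subset)
  qed
  then show ?thesis by (simp add: mult.commute)
qed

lemma edge_boundary_Un_converting:
  assumes G: "simple_graph V E" and R: "regular V E r" and "C \<subseteq> V"
    and "finite F" "F \<subseteq> V - C" "\<forall>v\<in>F. k \<le> card (nbhd V E v \<inter> C)"
  shows "edge_boundary V E (C \<union> F) + 2 * k * card F \<le> edge_boundary V E C + r * card F"
  using assms(4-6)
proof (induction F rule: finite_induct)
  case empty
  then show ?case by simp
next
  case (insert x F)
  have "x \<in> V" "x \<notin> C \<union> F" "C \<union> F \<subseteq> V"
    using insert.hyps insert.prems \<open>C \<subseteq> V\<close> by auto
  moreover have "card (nbhd V E x) = r"
    using R \<open>x \<in> V\<close> by (simp add: regular_def)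
  moreover have "card (nbhd V E x \<inter> C) \<le> card (nbhd V E x \<inter> (C \<union> F))"
    using finite_nbhd[OF G] by (intro card_mono) auto
  then have "k \<le> card (nbhd V E x \<inter> (C \<union> F))"
    using insert.prems by auto
  ultimately have "edge_boundary V E (C \<union> insert x F) + 2 * k \<le> edge_boundary V E (C \<union> F) + r"
    using edge_boundary_insert[OF G, of x "C \<union> F"] by simp
  then show ?case
    using insert by (simp add: algebra_simps)
qed

lemma converted_subset: "S0 \<subseteq> V \<Longrightarrow> converted V E k S0 t \<subseteq> V"
  by (induction t) auto

lemma converted_mono: "s \<le> t \<Longrightarrow> converted V E k S0 s \<subseteq> converted V E k S0 t"
  by (induction t) (auto simp: le_Suc_eq)

lemma finite_converted:
  assumes "simple_graph V E" "S0 \<subseteq> V"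
  shows "finite (converted V E k S0 t)"
proof -
  have "finite V"
    using assms(1) by (simp add: simple_graph_def)
  then show ?thesis
    using finite_subset[OF converted_subset[OF assms(2)]] by blast
qed

lemma edge_boundary_converted_step:
  assumes G: "simple_graph V E" and R: "regular V E r" and "S0 \<subseteq> V"
    and "converted V E k S0 t \<subseteq> D" "D \<subseteq> converted V E k S0 (Suc t)"
  shows "edge_boundary V E D + 2 * k * card (D - converted V E k S0 t)
           \<le> edge_boundary V E (converted V E k S0 t) + r * card (D - converted V E k S0 t)"
proof -
  let ?C = "converted V E k S0 t" and ?F = "D - converted V E k S0 t"
  have "finite ?F"
    using finite_subset[OF assms(5) finite_converted[OF G \<open>S0 \<subseteq> V\<close>]] by blast
  moreover have "?F \<subseteq> V - ?C" "\<forall>v\<in>?F. k \<le> card (nbhd V E v \<inter> ?C)"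
    using assms(5) by auto
  ultimately have bound: "edge_boundary V E (?C \<union> ?F) + 2 * k * card ?F
      \<le> edge_boundary V E ?C + r * card ?F"
    using edge_boundary_Un_converting[OF G R converted_subset[OF \<open>S0 \<subseteq> V\<close>]] by blast
  have "?C \<union> ?F = D"
    using assms(4) by blast
  then show ?thesis
    using bound by argo
qed

lemma card_Diff_chain:
  assumes "finite D" "S \<subseteq> C" "C \<subseteq> D"
  shows "card (D - S) = card (D - C) + card (C - S)"
proof -
  have "D - S = (D - C) \<union> (C - S)"
    using assms(2,3) by blast
  moreover have "finite (D - C)" "finite (C - S)"
    using assms(1,3) finite_subset[of "C - S" D] by auto
  ultimately show ?thesis
    by (metis card_Un_disjoint Diff_disjoint Int_Diff inf_commute)
qed

lemma edge_boundary_converted: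
  assumes G: "simple_graph V E" and R: "regular V E r" and "S0 \<subseteq> V"
    and "converted V E k S0 t \<subseteq> D" "D \<subseteq> converted V E k S0 (Suc t)"
  shows "edge_boundary V E D + 2 * k * card (D - S0) \<le> edge_boundary V E S0 + r * card (D - S0)"
  using assms(4,5)
proof (induction t arbitrary: D)
  case 0
  then show ?case
    using edge_boundary_converted_step[OF G R \<open>S0 \<subseteq> V\<close>, of k 0 D] by simp
next
  case (Suc t)
  define C where "C = converted V E k S0 (Suc t)"
  have "S0 \<subseteq> C"
    using converted_mono[of 0 "Suc t" V E k S0] by (simp add: C_def)
  moreover have "finite D"
    using finite_subset[OF Suc.prems(2) finite_converted[OF G \<open>S0 \<subseteq> V\<close>]] .
  ultimately have split: "card (D - S0) = card (D - C) + card (C - S0)"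
    using Suc.prems(1) card_Diff_chain unfolding C_def by blast
  have "edge_boundary V E D + 2 * k * card (D - C) \<le> edge_boundary V E C + r * card (D - C)"
    unfolding C_def by (rule edge_boundary_converted_step[OF G R \<open>S0 \<subseteq> V\<close> Suc.prems])
  moreover have "edge_boundary V E C + 2 * k * card (C - S0) \<le> edge_boundary V E S0 + r * card (C - S0)"
    unfolding C_def by (rule Suc.IH) simp_all
  ultimately show ?case
    unfolding split by (simp add: algebra_simps)
qed

lemma conversion_set_last_step:
  assumes "finite V" "conversion_set V E k S0" "V - S0 \<noteq> {}"
  obtains t w where "w \<in> V - converted V E k S0 t" "converted V E k S0 (Suc t) = V"
proof -
  let ?C = "converted V E k S0"
  have "S0 \<subseteq> V" and "\<forall>v\<in>V. \<exists>t. v \<in> ?C t"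
    using assms(2) unfolding conversion_set_def by blast+
  then obtain time where time: "\<forall>v\<in>V. v \<in> ?C (time v)"
    using bchoice[of V "\<lambda>v t. v \<in> ?C t"] by blast
  define M where "M = Max (time ` V)"
  have "V \<subseteq> ?C M"
  proof
    fix v assume "v \<in> V"
    then have "time v \<le> M"
      using \<open>finite V\<close> by (simp add: M_def)
    then show "v \<in> ?C M"
      using time \<open>v \<in> V\<close> converted_mono[of "time v" M V E k S0] by blast
  qed
  then have "?C M = V"
    using converted_subset[OF \<open>S0 \<subseteq> V\<close>, of E k M] by (rule subset_antisym[rotated])
  then have ex: "\<exists>T. ?C T = V" ..
  define T where "T = (LEAST T. ?C T = V)"
  have "?C T = V"
    unfolding T_def by (rule LeastI_ex[OF ex])
  moreover have "T \<noteq> 0"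
  proof
    assume "T = 0"
    with \<open>?C T = V\<close> have "S0 = V"
      by simp
    with assms(3) show False
      by simp
  qed
  then obtain t where "T = Suc t"
    using not0_implies_Suc by blast
  moreover have "?C t \<noteq> V"
    using not_less_Least[of t "\<lambda>T. ?C T = V"] \<open>T = Suc t\<close> unfolding T_def[symmetric] by simp
  then obtain w where "w \<in> V - ?C t"
    using converted_subset[OF \<open>S0 \<subseteq> V\<close>, of E k t] by blast
  ultimately show ?thesis
    using that[of w t] by simp
qed

lemma card_conversion_set_complement_le:
  assumes "k \<ge> 2" "simple_graph V E" "regular V E (k + 1)" "conversion_set V E k S0"
    "card S0 = k"
  shows "card (V - S0) \<le> k + 2"
proof (cases "V - S0 = {}")
  case False
  have "finite V" and "S0 \<subseteq> V"
    using assms(2,4) unfolding simple_graph_def conversion_set_def by blast+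
  obtain t w where w: "w \<in> V - converted V E k S0 t" and final: "converted V E k S0 (Suc t) = V"
    using conversion_set_last_step[OF \<open>finite V\<close> assms(4) False] .
  have "S0 \<subseteq> converted V E k S0 t"
    using converted_mono[of 0 t V E k S0] by simp
  with w have "w \<in> V - S0"
    by blast
  let ?D = "V - {w}"
  define m where "m = card (?D - S0)"
  have "converted V E k S0 t \<subseteq> ?D"
    using w converted_subset[OF \<open>S0 \<subseteq> V\<close>, of E k t] by blast
  moreover have "?D \<subseteq> converted V E k S0 (Suc t)"
    unfolding final by blast
  ultimately have "edge_boundary V E ?D + 2 * k * m \<le> edge_boundary V E S0 + (k + 1) * m"
    unfolding m_def by (rule edge_boundary_converted[OF assms(2,3) \<open>S0 \<subseteq> V\<close>])
  moreover have "edge_boundary V E ?D = k + 1"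
    using edge_boundary_Diff_singleton[OF assms(2)] \<open>w \<in> V - S0\<close> assms(3)
    unfolding regular_def by simp
  moreover have "edge_boundary V E S0 \<le> (k + 1) * k"
    using edge_boundary_le_regular[OF assms(2,3) \<open>S0 \<subseteq> V\<close>] assms(5) by simp
  ultimately have "k + 1 + 2 * k * m \<le> (k + 1) * k + (k + 1) * m"
    by linarith
  then have "real (k + 1 + 2 * k * m) \<le> real ((k + 1) * k + (k + 1) * m)"
    by (rule of_nat_mono)
  then have "(real k - 1) * real m \<le> (real k - 1) * (real k + 1)"
    by (simp add: algebra_simps)
  then have "m \<le> k + 1"
    using \<open>k \<ge> 2\<close> by (simp add: mult_le_cancel_left_pos)
  moreover have "?D - S0 = (V - S0) - {w}"
    by blast
  then have "card (V - S0) = Suc m"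
    unfolding m_def using card_Suc_Diff1[OF _ \<open>w \<in> V - S0\<close>] \<open>finite V\<close> by simp
  ultimately show ?thesis
    by simp
next
  case True
  then show ?thesis
    unfolding True by simp
qed

theorem proposition3p1:
  fixes V :: "'a set" and E :: "'a \<Rightarrow> 'a \<Rightarrow> bool" and S0 :: "'a set" and k :: nat
  assumes "k \<ge> 2"
    and "simple_graph V E"
    and "regular V E (k + 1)"
    and "conversion_set V E k S0"
    and "card S0 = k"
  shows "real (card (V - S0)) < (real k * (real k + 1) - 1) / (real k - 1)"
proof -
  have "real k - 1 > 0"
    using \<open>k \<ge> 2\<close> by simp
  have "real (card (V - S0)) \<le> real k + 2"
    using card_conversion_set_complement_le[OF assms] by simp
  then have "real (card (V - S0)) * (real k - 1) \<le> (real k + 2) * (real k - 1)"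
    using \<open>real k - 1 > 0\<close> by (simp add: mult_right_mono)
  also have "\<dots> < real k * (real k + 1) - 1"
    by (simp add: algebra_simps)
  finally show ?thesis
    using \<open>real k - 1 > 0\<close> by (simp add: pos_less_divide_eq)
qed

end
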